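(* Let $f$ be a pseudoperiodic meromorphic function. Then $f$ can be uniquely expressed either as a simply pseudoperiodic function with respect to $\tau_1\mathbb{Z}$, $\tau_1\in\mathbb{C}^*$, $$f(z)=az+\varphi(z),$$ with pseudoperiod $\eta_{\tau_1}=a\tau_1$, where $a\in\mathbb{C}$ and $\varphi$ is simply periodic of period $\tau_1$; or as a doubly pseudoperiodic function with respect to $\Lambda=\tau_1\mathbb{Z}+\tau_2\mathbb{Z}$, $\tau_2/\tau_1\in\mathbb{H}^+$, $$f(z)=az+b\zeta(z)+E(z),$$ with pseudoperiods $\eta_{\tau_1}=a\tau_1+2b\zeta(\tau_1/2)$ and $\eta_{\tau_2}=a\tau_2+2b\zeta(\tau_2/2)$, where $a,b\in\mathbb{C}$, $\zeta$ is the Weierstrass $\zeta$-function with respect to $\Lambda$, and $E$ is doubly periodic with periods $\tau_1,\tau_2$.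
   Context: A meromorphic $f:\mathbb{C}\to\widehat{\mathbb{C}}$ is pseudoperiodic with respect to a lattice $\Lambda$ (of the form $\tau_1\mathbb{Z}$ or $\tau_1\mathbb{Z}+\tau_2\mathbb{Z}$) if for each $\tau\in\Lambda$ there is $\eta_\tau\in\mathbb{C}$ (a pseudoperiod) with $f(z+\tau)=f(z)+\eta_\tau$ for all $z$. It is simply (resp. doubly) pseudoperiodic if all its pseudoperiods are of the form $m\eta_{\tau_1}$ (resp. $m\eta_{\tau_1}+n\eta_{\tau_2}$), $m,n\in\mathbb{Z}$, for some $\tau_1,\tau_2\in\mathbb{C}^*$ with $\operatorname{Im}(\tau_2/\tau_1)>0$. $\mathbb{H}^+=\{\operatorname{Im}z>0\}$. The Weierstrass $\zeta$-function is $\zeta(z)=\frac1z+\sum_{\omega\in\Lambda\setminus\{0\}}(\frac1{z-\omega}+\frac1\omega+\frac{z}{\omega^2})$. *)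

theory Defs
  imports "HOL-Complex_Analysis.Complex_Analysis"
begin

text \<open>Meromorphic functions are represented as total functions complex to complex that are
  meromorphic on the whole plane; their values at the (discrete) singular set are
  irrelevant, so all functional identities are required to hold outside a discrete
  set, i.e. eventually with respect to the filter cosparse UNIV.\<close>

definition lattice1 :: "complex \<Rightarrow> complex set" where
  "lattice1 t1 = {of_int m * t1 | m. True}"

definition lattice2 :: "complex \<Rightarrow> complex \<Rightarrow> complex set" where
  "lattice2 t1 t2 = {of_int m * t1 + of_int n * t2 | m n. True}"

definition pseudoperiodic_wrt :: "(complex \<Rightarrow> complex) \<Rightarrow> complex set \<Rightarrow> bool" where
  "pseudoperiodic_wrt f L \<longleftrightarrow>
     (\<forall>t\<in>L. \<exists>eta. \<forall>\<^sub>\<approx>z. f (z + t) = f z + eta)"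

definition has_period :: "(complex \<Rightarrow> complex) \<Rightarrow> complex \<Rightarrow> bool" where
  "has_period g t \<longleftrightarrow> (\<forall>\<^sub>\<approx>z. g (z + t) = g z)"

definition weierstrass_zeta :: "complex \<Rightarrow> complex \<Rightarrow> complex \<Rightarrow> complex" where
  "weierstrass_zeta t1 t2 z =
     1 / z + (\<Sum>\<^sub>\<infinity>w\<in>lattice2 t1 t2 - {0}. 1 / (z - w) + 1 / w + z / w ^ 2)"

end

theory Submission
  imports Defs
begin

text \<open>Subtracting \<open>a z\<close>, resp. \<open>a z + b \<zeta>(z)\<close>, from \<open>f\<close> subtracts the corresponding pseudoperiods,
  so the decomposition exists and is unique as soon as the pseudoperiods of \<open>f\<close> determine \<open>a\<close>,
  resp. \<open>(a, b)\<close>. For one period this is the equation \<open>a \<tau>\<^sub>1 = \<eta>\<close>. For a lattice, \<open>\<wp> = -\<zeta>'\<close> has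
  the derivative \<open>\<wp>'\<close>, an absolutely convergent lattice sum and hence periodic; so \<open>\<wp>(z + \<tau>) - \<wp>(z)\<close>
  is constant off the lattice, and it is \<open>0\<close> because \<open>\<wp>\<close> is even (evaluate at \<open>z = -\<tau>/2\<close>). Likewise
  \<open>\<zeta>(z + \<tau>) - \<zeta>(z)\<close> is constant, and since \<open>\<zeta>\<close> is odd it is \<open>\<eta> = 2 \<zeta>(\<tau>/2)\<close>. The linear system for
  \<open>(a, b)\<close> then has determinant \<open>\<tau>\<^sub>1 \<eta>\<^sub>2 - \<tau>\<^sub>2 \<eta>\<^sub>1\<close>, which is nonzero by Legendre's relation: the
  integral of \<open>\<zeta>\<close> around a period parallelogram is \<open>\<eta>\<^sub>1 \<tau>\<^sub>2 - \<eta>\<^sub>2 \<tau>\<^sub>1\<close> by quasi-periodicity, and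
  \<open>\<plusminus>2\<pi>\<i>\<close> by the residue at the one lattice point it encloses.\<close>

section \<open>Pseudoperiods\<close>

definition has_pseudoperiod :: "(complex \<Rightarrow> complex) \<Rightarrow> complex \<Rightarrow> complex \<Rightarrow> bool" where
  "has_pseudoperiod f t e \<longleftrightarrow> (\<forall>\<^sub>\<approx>z. f (z + t) = f z + e)"

lemma eventually_cosparse_translate:
  fixes t :: complex
  assumes "\<forall>\<^sub>\<approx>z. P z"
  shows "\<forall>\<^sub>\<approx>z. P (z + t)"
proof -
  have "eventually (\<lambda>z. P (z + t)) (at x)" for x
  proof -
    have "eventually P (at (x + t))"
      using assms by (simp add: eventually_cosparse_open_eq)
    moreover have "at (x + t) = filtermap (\<lambda>z. z + t) (at x)"
      using filtermap_at_shift[of "- t" x] by simp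
    ultimately show ?thesis by (simp add: eventually_filtermap)
  qed
  thus ?thesis by (simp add: eventually_cosparse_open_eq)
qed

lemma has_period_iff_has_pseudoperiod: "has_period f t \<longleftrightarrow> has_pseudoperiod f t 0"
  by (simp add: has_period_def has_pseudoperiod_def)

lemma has_pseudoperiod_unique:
  assumes "has_pseudoperiod f t e" "has_pseudoperiod f t e'"
  shows "e = e'"
proof -
  have "\<forall>\<^sub>\<approx>z. f (z + t) = f z + e \<and> f (z + t) = f z + e'"
    using assms unfolding has_pseudoperiod_def by (rule eventually_conj)
  then obtain z where "f (z + t) = f z + e" "f (z + t) = f z + e'"
    using eventually_happens' by force
  thus ?thesis by simp
qed

lemma has_pseudoperiod_cong:
  assumes "\<forall>\<^sub>\<approx>z. f z = g z" "has_pseudoperiod g t e"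
  shows "has_pseudoperiod f t e"
  using assms(1) eventually_cosparse_translate[OF assms(1), of t] assms(2)
  unfolding has_pseudoperiod_def by eventually_elim simp

lemma has_pseudoperiod_linear: "has_pseudoperiod (\<lambda>z. a * z) t (a * t)"
  by (simp add: has_pseudoperiod_def algebra_simps)

lemma has_pseudoperiod_cmult:
  "has_pseudoperiod f t e \<Longrightarrow> has_pseudoperiod (\<lambda>z. c * f z) t (c * e)"
  unfolding has_pseudoperiod_def by (elim eventually_mono) (simp add: algebra_simps)

lemma has_pseudoperiod_add:
  assumes "has_pseudoperiod f t e" "has_pseudoperiod g t e'"
  shows "has_pseudoperiod (\<lambda>z. f z + g z) t (e + e')"
  using assms unfolding has_pseudoperiod_def by eventually_elim simp

lemma has_pseudoperiod_diff:
  assumes "has_pseudoperiod f t e" "has_pseudoperiod g t e'"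
  shows "has_pseudoperiod (\<lambda>z. f z - g z) t (e - e')"
  using assms unfolding has_pseudoperiod_def by eventually_elim simp

lemma has_pseudoperiod_add_periodic:
  assumes "\<forall>\<^sub>\<approx>z. f z = g z + E z" "has_pseudoperiod g t e" "has_period E t"
  shows "has_pseudoperiod f t e"
  using has_pseudoperiod_cong[OF assms(1) has_pseudoperiod_add[OF assms(2)], of 0] assms(3)
  by (simp add: has_period_iff_has_pseudoperiod)

section \<open>The period lattice\<close>

lemma summable_on_int_powr:
  fixes p :: real
  assumes "p > 1"
  shows "(\<lambda>m::int. (real_of_int \<bar>m\<bar> + 1) powr (- p)) summable_on UNIV"
proof -
  let ?g = "\<lambda>m::int. (real_of_int \<bar>m\<bar> + 1) powr (- p)"
  have "summable (\<lambda>n::nat. real n powr (- p))"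
    using assms by (subst summable_real_powr_iff) auto
  hence s: "summable (\<lambda>n::nat. (real n + 1) powr (- p))"
    by (subst (asm) summable_Suc_iff[symmetric]) (simp add: add.commute)
  hence "summable (\<lambda>n::nat. (real (Suc n) + 1) powr (- p))"
    by (subst summable_Suc_iff)
  hence "?g summable_on range (\<lambda>n. - int (Suc n))"
    by (subst summable_on_reindex) (auto simp: o_def inj_on_def intro: norm_summable_imp_summable_on)
  moreover have "?g summable_on range int"
    using s by (subst summable_on_reindex) (auto simp: o_def intro: norm_summable_imp_summable_on)
  moreover have "(UNIV :: int set) = range int \<union> range (\<lambda>n. - int (Suc n))"
    by (auto simp: image_iff) presburger
  ultimately show ?thesis
    by (metis summable_on_union)
qed

lemma summable_on_product:
  fixes f g :: "'a \<Rightarrow> real"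
  assumes "f summable_on A" "g summable_on B" "\<And>x. x \<in> A \<Longrightarrow> f x \<ge> 0" "\<And>y. y \<in> B \<Longrightarrow> g y \<ge> 0"
  shows "(\<lambda>(x, y). f x * g y) summable_on A \<times> B"
proof (rule summable_on_SigmaI)
  show "((\<lambda>y. case (x, y) of (x, y) \<Rightarrow> f x * g y) has_sum f x * infsum g B) B" for x
    using assms(2) by (simp add: has_sum_cmult_right)
  show "(\<lambda>x. f x * infsum g B) summable_on A"
    using assms(1) by (rule summable_on_cmult_left)
qed (use assms in auto)

locale period_lattice =
  fixes t1 t2 :: complex
  assumes Im_ratio_pos: "Im (t2 / t1) > 0"
begin

abbreviation \<Lambda> :: "complex set" where
  "\<Lambda> \<equiv> lattice2 t1 t2"

definition point :: "real \<Rightarrow> real \<Rightarrow> complex" where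
  "point x y = of_real x * t1 + of_real y * t2"

definition lattice_point :: "int \<times> int \<Rightarrow> complex" where
  "lattice_point = (\<lambda>(m, n). point (of_int m) (of_int n))"

definition \<kappa> :: real where
  "\<kappa> = norm t1 * (Im (t2 / t1) / (Im (t2 / t1) + 1 + \<bar>Re (t2 / t1)\<bar>))"

lemma t1_nonzero: "t1 \<noteq> 0"
  using Im_ratio_pos by auto

lemma \<kappa>_pos: "\<kappa> > 0"
  using Im_ratio_pos t1_nonzero unfolding \<kappa>_def by (intro mult_pos_pos divide_pos_pos) auto

text \<open>Writing \<open>point x y = t1 (x + y \<tau>)\<close> with \<open>\<tau> = t2 / t1\<close>, the imaginary part of \<open>x + y \<tau>\<close> bounds
  \<open>\<bar>y\<bar>\<close> and then its real part bounds \<open>\<bar>x\<bar>\<close>; this is where \<open>\<kappa>\<close> comes from.\<close>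
lemma norm_point_ge: "\<kappa> * (\<bar>x\<bar> + \<bar>y\<bar>) \<le> norm (point x y)"
proof -
  define u where "u = t2 / t1"
  define k where "k = Im u"
  define a where "a = \<bar>Re u\<bar>"
  define N where "N = norm (of_real x + of_real y * u :: complex)"
  have k: "k > 0" using Im_ratio_pos by (simp add: k_def u_def)
  have a: "a \<ge> 0" by (simp add: a_def)
  have N1: "\<bar>y\<bar> * k \<le> N"
    using abs_Im_le_cmod[of "of_real x + of_real y * u"] k by (simp add: N_def k_def abs_mult)
  have "\<bar>x\<bar> - \<bar>y\<bar> * a \<le> \<bar>x + y * Re u\<bar>"
    using abs_triangle_ineq4[of "x + y * Re u" "y * Re u"] by (simp add: a_def abs_mult)
  also have "\<dots> \<le> N"
    using abs_Re_le_cmod[of "of_real x + of_real y * u"] by (simp add: N_def)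
  finally have N2: "\<bar>x\<bar> - \<bar>y\<bar> * a \<le> N" .
  have "k * (\<bar>x\<bar> + \<bar>y\<bar>) \<le> (k + 1 + a) * N"
  proof -
    have "(1 + a) * (\<bar>y\<bar> * k) \<le> (1 + a) * N" using N1 a by (intro mult_left_mono) auto
    moreover have "k * (\<bar>x\<bar> - \<bar>y\<bar> * a) \<le> k * N" using N2 k by (intro mult_left_mono) auto
    ultimately show ?thesis by (simp add: algebra_simps)
  qed
  hence "k / (k + 1 + a) * (\<bar>x\<bar> + \<bar>y\<bar>) \<le> N"
    using k a by (simp add: field_simps)
  hence "norm t1 * (k / (k + 1 + a) * (\<bar>x\<bar> + \<bar>y\<bar>)) \<le> norm t1 * N"
    by (intro mult_left_mono) auto
  moreover have "point x y = t1 * (of_real x + of_real y * u)"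
    using t1_nonzero by (simp add: point_def u_def field_simps)
  ultimately show ?thesis
    by (simp add: \<kappa>_def k_def a_def u_def N_def norm_mult mult.assoc)
qed

lemma point_diff: "point x y - point x' y' = point (x - x') (y - y')"
  by (simp add: point_def algebra_simps)

lemma point_eq_0_iff: "point x y = 0 \<longleftrightarrow> x = 0 \<and> y = 0"
proof
  assume "point x y = 0"
  hence "\<kappa> * (\<bar>x\<bar> + \<bar>y\<bar>) \<le> 0" using norm_point_ge[of x y] by simp
  with \<kappa>_pos show "x = 0 \<and> y = 0"
    by (smt (verit) mult_pos_pos)
qed (simp add: point_def)

lemma point_eq_iff: "point x y = point x' y' \<longleftrightarrow> x = x' \<and> y = y'"
  using point_eq_0_iff[of "x - x'" "y - y'"] by (auto simp: point_diff[symmetric])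

lemma lattice_eq_range: "\<Lambda> = range lattice_point"
  unfolding lattice2_def lattice_point_def point_def by auto

lemma point_in_lattice_iff: "point x y \<in> \<Lambda> \<longleftrightarrow> x \<in> \<int> \<and> y \<in> \<int>"
  unfolding lattice_eq_range lattice_point_def
  by (auto simp: point_eq_iff elim!: Ints_cases)

lemma inj_lattice_point: "inj lattice_point"
  by (rule injI) (auto simp: lattice_point_def point_eq_iff)

lemma lattice_point_eq_0_iff: "lattice_point p = 0 \<longleftrightarrow> p = (0, 0)"
  by (cases p) (simp add: lattice_point_def point_eq_0_iff)

lemma norm_lattice_point_ge:
  "\<kappa> * (real_of_int \<bar>m\<bar> + real_of_int \<bar>n\<bar>) \<le> norm (lattice_point (m, n))"
  using norm_point_ge[of "of_int m" "of_int n"] by (simp add: lattice_point_def)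

lemma zero_in_lattice [simp]: "0 \<in> \<Lambda>"
  and t1_in_lattice [simp]: "t1 \<in> \<Lambda>"
  and t2_in_lattice [simp]: "t2 \<in> \<Lambda>"
  using point_in_lattice_iff[of 0 0] point_in_lattice_iff[of 1 0] point_in_lattice_iff[of 0 1]
  by (simp_all add: point_def)

lemma half_periods_not_in_lattice: "t1 / 2 \<notin> \<Lambda>" "t2 / 2 \<notin> \<Lambda>"
  using point_in_lattice_iff[of "1/2" 0] point_in_lattice_iff[of 0 "1/2"]
  by (simp_all add: point_def)

lemma lattice_add: "w \<in> \<Lambda> \<Longrightarrow> v \<in> \<Lambda> \<Longrightarrow> w + v \<in> \<Lambda>"
proof (unfold lattice_eq_range, elim rangeE)
  fix p q assume "w = lattice_point p" "v = lattice_point q"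
  hence "w + v = lattice_point (fst p + fst q, snd p + snd q)"
    by (simp add: lattice_point_def point_def case_prod_unfold algebra_simps)
  thus "w + v \<in> range lattice_point" by simp
qed

lemma lattice_uminus_iff [simp]: "- w \<in> \<Lambda> \<longleftrightarrow> w \<in> \<Lambda>"
proof -
  have "- w \<in> \<Lambda>" if "w \<in> \<Lambda>" for w
  proof (use that in \<open>unfold lattice_eq_range, elim rangeE\<close>)
    fix p assume "w = lattice_point p"
    hence "- w = lattice_point (- fst p, - snd p)"
      by (simp add: lattice_point_def point_def case_prod_unfold algebra_simps)
    thus "- w \<in> range lattice_point" by simp
  qed
  from this[of w] this[of "- w"] show ?thesis by auto
qed

lemma lattice_translate_iff: "t \<in> \<Lambda> \<Longrightarrow> z + t \<in> \<Lambda> \<longleftrightarrow> z \<in> \<Lambda>"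
  using lattice_add[of "z + t" "- t"] lattice_add[of z t] by auto

lemma finite_lattice_inter_cball: "finite (\<Lambda> \<inter> cball z R)"
proof -
  define N where "N = ceiling ((norm z + R) / \<kappa>)"
  have "\<Lambda> \<inter> cball z R \<subseteq> lattice_point ` ({-N..N} \<times> {-N..N})"
  proof
    fix w assume w: "w \<in> \<Lambda> \<inter> cball z R"
    then obtain m n where w_eq: "w = lattice_point (m, n)"
      unfolding lattice_eq_range by auto
    have "norm w \<le> norm z + R"
      using w norm_triangle_ineq2[of w z] by (auto simp: dist_norm norm_minus_commute)
    hence "\<kappa> * (real_of_int \<bar>m\<bar> + real_of_int \<bar>n\<bar>) \<le> norm z + R"
      using norm_lattice_point_ge[of m n] unfolding w_eq by linarith
    hence "real_of_int \<bar>m\<bar> + real_of_int \<bar>n\<bar> \<le> (norm z + R) / \<kappa>"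
      using \<kappa>_pos by (simp add: field_simps)
    hence "\<bar>m\<bar> \<le> N" "\<bar>n\<bar> \<le> N" unfolding N_def by linarith+
    thus "w \<in> lattice_point ` ({-N..N} \<times> {-N..N})"
      unfolding w_eq by (intro imageI) (simp add: abs_le_iff)
  qed
  thus ?thesis by (rule finite_subset) auto
qed

lemma lattice_separated: "\<exists>r>0. \<forall>w\<in>\<Lambda>. w \<noteq> z \<longrightarrow> r \<le> dist z w"
proof -
  obtain d where d: "d > 0" "\<forall>w\<in>\<Lambda> \<inter> cball z 1. w \<noteq> z \<longrightarrow> d \<le> dist z w"
    using finite_set_avoid[OF finite_lattice_inter_cball[of z 1], of z] by blast
  show ?thesis
    by (rule exI[of _ "min d 1"]) (use d in \<open>auto simp: not_le\<close>)
qed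

lemma lattice_sparse: "\<Lambda> sparse_in UNIV"
proof -
  have "\<not> z islimpt \<Lambda>" for z
    using lattice_separated[of z] unfolding islimpt_approachable
    by (metis dist_commute not_less)
  thus ?thesis by (simp add: sparse_in_open)
qed

lemma closed_lattice: "closed \<Lambda>"
  using lattice_sparse by (rule sparse_in_UNIV_imp_closed)

lemma countable_lattice: "countable \<Lambda>"
  unfolding lattice_eq_range by simp

lemma eventually_not_in_lattice: "\<forall>\<^sub>\<approx>z. z \<notin> \<Lambda>"
  using lattice_sparse by (rule eventually_not_in_cosparse)

lemma norm_lattice_ge: "w \<in> \<Lambda> \<Longrightarrow> w \<noteq> 0 \<Longrightarrow> \<kappa> \<le> norm w"
  unfolding lattice_eq_range
proof (elim rangeE)
  fix p assume "w \<noteq> 0" "w = lattice_point p"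
  moreover obtain m n where p: "p = (m, n)" by fastforce
  ultimately have "(m, n) \<noteq> (0, 0)" and w: "w = lattice_point (m, n)"
    using lattice_point_eq_0_iff by auto
  hence "1 \<le> real_of_int \<bar>m\<bar> + real_of_int \<bar>n\<bar>" by (cases "m = 0") auto
  thus "\<kappa> \<le> norm w"
    using norm_lattice_point_ge[of m n] \<kappa>_pos unfolding w
    by (smt (verit) mult_le_cancel_left1)
qed

lemma inverse_cube_norm_lattice_point_le:
  assumes "(m, n) \<noteq> (0, 0)"
  shows "1 / norm (lattice_point (m, n)) ^ 3 \<le>
           8 / \<kappa> ^ 3 * ((real_of_int \<bar>m\<bar> + 1) powr (-3/2) * (real_of_int \<bar>n\<bar> + 1) powr (-3/2))"
proof -
  define s where "s = real_of_int \<bar>m\<bar> + real_of_int \<bar>n\<bar>"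
  define P where "P = (real_of_int \<bar>m\<bar> + 1) * (real_of_int \<bar>n\<bar> + 1)"
  have s: "s \<ge> 1" using assms unfolding s_def by (cases "m = 0") auto
  have P: "P \<ge> 1" unfolding P_def
    using mult_mono[of 1 "real_of_int \<bar>m\<bar> + 1" 1 "real_of_int \<bar>n\<bar> + 1"] by simp
  have "P \<le> (2 * s) powr 2"
    using s unfolding P_def s_def by (simp add: power2_eq_square mult_mono)
  hence "P powr (3/2) \<le> ((2 * s) powr 2) powr (3/2)"
    using P by (intro powr_mono2) auto
  also have "\<dots> = (2 * s) powr 3"
    by (simp only: powr_powr) simp
  also have "\<dots> = 8 * s ^ 3"
    using s by (subst powr_numeral) (auto simp: power_mult_distrib)
  finally have "1 / (8 * s ^ 3) \<le> 1 / P powr (3/2)"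
    using s P by (intro divide_left_mono) auto
  also have "\<dots> = (real_of_int \<bar>m\<bar> + 1) powr (-3/2) * (real_of_int \<bar>n\<bar> + 1) powr (-3/2)"
    by (simp add: P_def powr_mult powr_minus_divide)
  finally have P_bound: "1 / (8 * s ^ 3) \<le> \<dots>" .
  have "\<kappa> * s \<le> norm (lattice_point (m, n))"
    using norm_lattice_point_ge[of m n] by (simp add: s_def)
  hence "1 / norm (lattice_point (m, n)) ^ 3 \<le> 1 / (\<kappa> * s) ^ 3"
    using \<kappa>_pos s by (intro frac_le power_mono) auto
  also have "\<dots> = 8 / \<kappa> ^ 3 * (1 / (8 * s ^ 3))"
    by (simp add: power_mult_distrib)
  also have "\<dots> \<le> 8 / \<kappa> ^ 3 * ((real_of_int \<bar>m\<bar> + 1) powr (-3/2) * (real_of_int \<bar>n\<bar> + 1) powr (-3/2))"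
    using \<kappa>_pos P_bound by (intro mult_left_mono) auto
  finally show ?thesis .
qed

lemma summable_inverse_cube_lattice: "(\<lambda>w. 1 / norm w ^ 3) summable_on (\<Lambda> - {0})"
proof -
  define g where "g = (\<lambda>m::int. (real_of_int \<bar>m\<bar> + 1) powr (-3/2))"
  have "(\<lambda>(m, n). g m * g n) summable_on UNIV \<times> UNIV"
    using summable_on_int_powr[of "3/2"] by (intro summable_on_product) (auto simp: g_def)
  hence "(\<lambda>(m, n). g m * g n) summable_on UNIV - {(0, 0)}"
    by (rule summable_on_subset_banach) auto
  hence "(\<lambda>p. 8 / \<kappa> ^ 3 * (case p of (m, n) \<Rightarrow> g m * g n)) summable_on UNIV - {(0, 0)}"
    by (rule summable_on_cmult_right)
  hence "(\<lambda>p. 1 / norm (lattice_point p) ^ 3) summable_on UNIV - {(0, 0)}"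
    by (rule summable_on_comparison_test)
       (use inverse_cube_norm_lattice_point_le in \<open>auto simp: g_def\<close>)
  moreover have "\<Lambda> - {0} = lattice_point ` (UNIV - {(0, 0)})"
    unfolding lattice_eq_range using lattice_point_eq_0_iff by auto
  ultimately show ?thesis
    by (simp add: summable_on_reindex inj_on_subset[OF inj_lattice_point] o_def)
qed

end

section \<open>The Weierstrass functions\<close>

lemma norm_diff_ge_scaled_norm:
  fixes u w :: "'a::real_normed_vector"
  assumes "norm u \<le> R" "r \<le> norm (u - w)" "r > 0"
  shows "r / (R + r) * norm w \<le> norm (u - w)"
proof (cases "norm w \<le> R + r")
  case True
  have "R \<ge> 0" using assms(1) norm_ge_zero[of u] by linarith
  hence "r / (R + r) * norm w \<le> r / (R + r) * (R + r)"
    using True assms(3) by (intro mult_left_mono) auto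
  also have "\<dots> = r"
    using \<open>R \<ge> 0\<close> assms(3) by simp
  finally show ?thesis using assms(2) by linarith
next
  case False
  have "R \<ge> 0" using assms(1) norm_ge_zero[of u] by linarith
  have "r * norm w \<le> (norm w - R) * (R + r)"
    using mult_left_mono[of "R + r" "norm w" R] False \<open>R \<ge> 0\<close> by (simp add: algebra_simps)
  hence "r / (R + r) * norm w \<le> norm w - R"
    using assms(3) \<open>R \<ge> 0\<close> by (simp add: field_simps)
  also have "\<dots> \<le> norm (u - w)"
    using norm_triangle_ineq2[of w u] assms(1) by (simp add: norm_minus_commute)
  finally show ?thesis .
qed

lemma has_field_derivative_infsum:
  fixes f f' :: "'a \<Rightarrow> complex \<Rightarrow> complex" and M :: "'a \<Rightarrow> real"
  assumes "r > 0" and M: "M summable_on A"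
    and bound: "\<And>w z. w \<in> A \<Longrightarrow> z \<in> cball a r \<Longrightarrow> norm (f w z) \<le> M w"
    and deriv: "\<And>w z. w \<in> A \<Longrightarrow> z \<in> cball a r \<Longrightarrow> (f w has_field_derivative f' w z) (at z)"
  shows "((\<lambda>z. \<Sum>\<^sub>\<infinity>w\<in>A. f w z) has_field_derivative (\<Sum>\<^sub>\<infinity>w\<in>A. f' w a)) (at a)"
    and "(\<lambda>w. f' w a) summable_on A"
proof -
  have partial_sums: "\<forall>\<^sub>F F in finite_subsets_at_top A. continuous_on (cball a r) (\<lambda>z. \<Sum>w\<in>F. f w z) \<and>
          (\<forall>u\<in>ball a r. ((\<lambda>z. \<Sum>w\<in>F. f w z) has_field_derivative (\<Sum>w\<in>F. f' w u)) (at u))"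
  proof (rule eventually_finite_subsets_at_top_weakI, intro conjI ballI)
    fix F assume F: "finite F" "F \<subseteq> A"
    show "continuous_on (cball a r) (\<lambda>z. \<Sum>w\<in>F. f w z)"
      using F deriv
      by (intro continuous_on_sum continuous_at_imp_continuous_on) (blast intro: DERIV_isCont)
    show "((\<lambda>z. \<Sum>w\<in>F. f w z) has_field_derivative (\<Sum>w\<in>F. f' w u)) (at u)"
      if "u \<in> ball a r" for u
      using F that deriv by (intro DERIV_sum) auto
  qed
  have uniform: "uniform_limit (cball a r) (\<lambda>F z. \<Sum>w\<in>F. f w z) (\<lambda>z. \<Sum>\<^sub>\<infinity>w\<in>A. f w z)
                   (finite_subsets_at_top A)"
    using bound M by (rule Weierstrass_m_test_general)
  obtain g' where g': "\<And>u. u \<in> ball a r \<Longrightarrow>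
      ((\<lambda>z. \<Sum>\<^sub>\<infinity>w\<in>A. f w z) has_field_derivative g' u) (at u) \<and>
      ((\<lambda>F. \<Sum>w\<in>F. f' w u) \<longlongrightarrow> g' u) (finite_subsets_at_top A)"
    using has_complex_derivative_uniform_limit[OF partial_sums uniform
            finite_subsets_at_top_neq_bot \<open>r > 0\<close>]
    by blast
  have "a \<in> ball a r" using \<open>r > 0\<close> by simp
  note g'_a = g'[OF this]
  hence "((\<lambda>w. f' w a) has_sum g' a) A"
    by (simp add: has_sum_def)
  with g'_a show "((\<lambda>z. \<Sum>\<^sub>\<infinity>w\<in>A. f w z) has_field_derivative (\<Sum>\<^sub>\<infinity>w\<in>A. f' w a)) (at a)"
    and "(\<lambda>w. f' w a) summable_on A"
    by (auto simp: infsumI summable_on_def)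
qed

lemma translation_difference_constant:
  fixes g g' :: "complex \<Rightarrow> complex"
  assumes "countable A" "closed A"
    and translate: "\<And>z. z \<notin> A \<Longrightarrow> z + t \<notin> A" and half: "- (t / 2) \<notin> A"
    and deriv: "\<And>z. z \<notin> A \<Longrightarrow> (g has_field_derivative g' z) (at z)"
    and periodic: "\<And>z. z \<notin> A \<Longrightarrow> g' (z + t) = g' z"
    and "z \<notin> A"
  shows "g (z + t) = g z + (g (t / 2) - g (- (t / 2)))"
proof -
  define h where "h = (\<lambda>x. g (x + t) - g x)"
  have h_deriv: "(h has_field_derivative 0) (at x)" if "x \<notin> A" for x
  proof -
    have "((\<lambda>x. g (x + t)) has_field_derivative g' (x + t)) (at x)"
      using deriv[OF translate[OF that]] by (simp add: DERIV_shift)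
    from DERIV_diff[OF this deriv[OF that]] show ?thesis
      by (simp add: h_def periodic[OF that])
  qed
  have "open (- A)" "connected (- A)"
    using assms(1,2) connected_open_diff_countable[of UNIV A]
    by (auto simp: Compl_eq_Diff_UNIV)
  moreover have "continuous_on (- A) h"
    using h_deriv by (intro continuous_at_imp_continuous_on) (auto intro: DERIV_isCont)
  ultimately obtain c where c: "\<And>x. x \<in> - A \<Longrightarrow> h x = c"
    using DERIV_zero_connected_constant[of "- A" "{}" h] h_deriv by auto
  have "h z = h (- (t / 2))"
    using c \<open>z \<notin> A\<close> half by simp
  thus ?thesis by (simp add: h_def algebra_simps)
qed

context period_lattice
begin

abbreviation \<zeta> :: "complex \<Rightarrow> complex" where
  "\<zeta> \<equiv> weierstrass_zeta t1 t2"

definition zeta_term :: "complex \<Rightarrow> complex \<Rightarrow> complex" where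
  "zeta_term w z = 1 / (z - w) + 1 / w + z / w ^ 2"

definition wp_term :: "complex \<Rightarrow> complex \<Rightarrow> complex" where
  "wp_term w z = 1 / (z - w) ^ 2 - 1 / w ^ 2"

definition wp :: "complex \<Rightarrow> complex" where
  "wp z = 1 / z ^ 2 + (\<Sum>\<^sub>\<infinity>w\<in>\<Lambda> - {0}. wp_term w z)"

definition wp' :: "complex \<Rightarrow> complex" where
  "wp' z = (\<Sum>\<^sub>\<infinity>w\<in>\<Lambda>. - 2 / (z - w) ^ 3)"

lemma weierstrass_zeta_altdef: "\<zeta> z = 1 / z + (\<Sum>\<^sub>\<infinity>w\<in>\<Lambda> - {0}. zeta_term w z)"
  by (simp add: weierstrass_zeta_def zeta_term_def)

lemma zeta_term_eq: "w \<noteq> 0 \<Longrightarrow> z \<noteq> w \<Longrightarrow> zeta_term w z = z ^ 2 / (w ^ 2 * (z - w))"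
  by (simp add: zeta_term_def divide_simps) (simp add: algebra_simps power2_eq_square)

lemma wp_term_eq:
  "w \<noteq> 0 \<Longrightarrow> z \<noteq> w \<Longrightarrow> wp_term w z = z * (2 * w - z) / (w ^ 2 * (z - w) ^ 2)"
  by (simp add: wp_term_def divide_simps) (simp add: algebra_simps power2_eq_square)

lemma norm_zeta_term_le:
  assumes "w \<noteq> 0" "norm u \<le> R" "c * norm w \<le> norm (u - w)" "c > 0"
  shows "norm (zeta_term w u) \<le> R ^ 2 / c / norm w ^ 3"
proof -
  have "0 < c * norm w" using assms(1,4) by simp
  hence "u \<noteq> w" using assms(3) by auto
  have "norm (zeta_term w u) = norm u ^ 2 / (norm w ^ 2 * norm (u - w))"
    using assms(1) \<open>u \<noteq> w\<close> by (simp add: zeta_term_eq norm_divide norm_mult norm_power)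
  also have "\<dots> \<le> R ^ 2 / (norm w ^ 2 * (c * norm w))"
    using assms by (intro frac_le mult_left_mono power_mono mult_pos_pos) auto
  also have "\<dots> = R ^ 2 / c / norm w ^ 3"
    by (simp add: field_simps power3_eq_cube power2_eq_square)
  finally show ?thesis .
qed

lemma norm_wp_term_le:
  assumes "\<kappa> \<le> norm w" "norm u \<le> R" "c * norm w \<le> norm (u - w)" "c > 0"
  shows "norm (wp_term w u) \<le> R * (2 + R / \<kappa>) / c ^ 2 / norm w ^ 3"
proof -
  have "w \<noteq> 0" using assms(1) \<kappa>_pos by auto
  hence "0 < c * norm w" using assms(4) by simp
  hence "u \<noteq> w" using assms(3) by auto
  have "R \<ge> 0" using assms(2) norm_ge_zero[of u] by linarith
  have "norm (2 * w - u) \<le> 2 * norm w + R"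
    using norm_triangle_ineq4[of "2 * w" u] assms(2) by simp
  also have "\<dots> \<le> (2 + R / \<kappa>) * norm w"
    using mult_left_mono[OF assms(1) \<open>R \<ge> 0\<close>] \<kappa>_pos by (simp add: field_simps)
  finally have numerator: "norm (2 * w - u) \<le> (2 + R / \<kappa>) * norm w" .
  have "norm (wp_term w u) = norm u * norm (2 * w - u) / (norm w ^ 2 * norm (u - w) ^ 2)"
    using \<open>w \<noteq> 0\<close> \<open>u \<noteq> w\<close> by (simp add: wp_term_eq norm_divide norm_mult norm_power)
  also have "\<dots> \<le> R * ((2 + R / \<kappa>) * norm w) / (norm w ^ 2 * (c * norm w) ^ 2)"
    using assms numerator \<open>w \<noteq> 0\<close> \<open>R \<ge> 0\<close> \<kappa>_pos
    by (intro frac_le mult_left_mono power_mono mult_pos_pos mult_mono) auto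
  also have "\<dots> = R * (2 + R / \<kappa>) / c ^ 2 / norm w ^ 3"
    using \<open>w \<noteq> 0\<close> assms(4) by (simp add: field_simps power3_eq_cube power2_eq_square)
  finally show ?thesis .
qed

lemma lattice_terms_bound:
  assumes "B \<subseteq> \<Lambda> - {0}" and "z \<notin> B"
  obtains r K where "r > 0" "cball z r \<inter> B = {}"
    "\<And>w u. w \<in> B \<Longrightarrow> u \<in> cball z r \<Longrightarrow>
       norm (zeta_term w u) \<le> K / norm w ^ 3 \<and> norm (wp_term w u) \<le> K / norm w ^ 3"
proof -
  obtain \<rho> where \<rho>: "\<rho> > 0" "\<And>w. w \<in> \<Lambda> \<Longrightarrow> w \<noteq> z \<Longrightarrow> \<rho> \<le> dist z w"
    using lattice_separated by blast
  define r where "r = \<rho> / 2"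
  define R where "R = norm z + r"
  define c where "c = r / (R + r)"
  define K where "K = R ^ 2 / c + R * (2 + R / \<kappa>) / c ^ 2"
  have r: "r > 0" using \<rho>(1) by (simp add: r_def)
  have R: "R > 0" using r unfolding R_def by (simp add: add_nonneg_pos)
  have c: "c > 0" using r R unfolding c_def by simp
  have estimates: "norm u \<le> R \<and> c * norm w \<le> norm (u - w) \<and> \<kappa> \<le> norm w \<and> w \<noteq> 0"
    if w: "w \<in> B" and u: "u \<in> cball z r" for w u
  proof -
    have "norm u \<le> R"
      using u norm_triangle_ineq2[of u z] by (auto simp: R_def dist_norm norm_minus_commute)
    moreover have "r \<le> norm (u - w)"
    proof -
      have "2 * r \<le> dist z w"
        using \<rho>(2)[of w] w assms by (auto simp: r_def)
      also have "\<dots> \<le> dist z u + dist u w"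
        by (rule dist_triangle)
      finally show ?thesis
        using u by (simp add: dist_norm)
    qed
    ultimately show ?thesis
      using norm_diff_ge_scaled_norm[of u R r w] norm_lattice_ge[of w] w assms(1) r
      by (auto simp: c_def)
  qed
  show ?thesis
  proof (rule that[of r K])
    show "cball z r \<inter> B = {}"
      using estimates r c by (fastforce simp: mult_le_0_iff)
  next
    fix w u assume "w \<in> B" "u \<in> cball z r"
    with estimates c have "norm (zeta_term w u) \<le> R ^ 2 / c / norm w ^ 3"
      and "norm (wp_term w u) \<le> R * (2 + R / \<kappa>) / c ^ 2 / norm w ^ 3"
      by (intro norm_zeta_term_le norm_wp_term_le; auto)+
    moreover have "R ^ 2 / c / norm w ^ 3 \<le> K / norm w ^ 3"
      and "R * (2 + R / \<kappa>) / c ^ 2 / norm w ^ 3 \<le> K / norm w ^ 3"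
      using c R \<kappa>_pos by (intro divide_right_mono; auto simp: K_def)+
    ultimately show "norm (zeta_term w u) \<le> K / norm w ^ 3 \<and> norm (wp_term w u) \<le> K / norm w ^ 3"
      by linarith
  qed (use r in auto)
qed

lemma zeta_term_has_field_derivative:
  assumes "w \<noteq> 0" "z \<noteq> w"
  shows "(zeta_term w has_field_derivative - wp_term w z) (at z)"
proof -
  have "((\<lambda>z. 1 / (z - w) + 1 / w + z / w ^ 2) has_field_derivative
          - 1 / (z - w) ^ 2 + 1 / w ^ 2) (at z)"
    using assms by (auto intro!: derivative_eq_intros simp: power2_eq_square)
  thus ?thesis unfolding zeta_term_def[abs_def] wp_term_def by simp
qed

lemma wp_term_has_field_derivative:
  assumes "z \<noteq> w"
  shows "(wp_term w has_field_derivative - 2 / (z - w) ^ 3) (at z)"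
proof -
  have "z - w \<noteq> 0" using assms by simp
  have "(2 * w - 2 * z) / (z - w) ^ 4 = - 2 / (z - w) ^ 3"
  proof -
    have "(2 * w - 2 * z) / (z - w) ^ 4 = - 2 * (z - w) / ((z - w) ^ 3 * (z - w))"
      by (simp add: eval_nat_numeral algebra_simps)
    also have "\<dots> = - 2 / (z - w) ^ 3"
      using \<open>z - w \<noteq> 0\<close> by (rule nonzero_mult_divide_mult_cancel_right)
    finally show ?thesis .
  qed
  hence "((\<lambda>z. 1 / (z - w) ^ 2 - 1 / w ^ 2) has_field_derivative - 2 / (z - w) ^ 3) (at z)"
    using \<open>z - w \<noteq> 0\<close> by (auto intro!: derivative_eq_intros)
  thus ?thesis unfolding wp_term_def[abs_def] .
qed

lemma summable_inverse_cube_subset: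
  "B \<subseteq> \<Lambda> - {0} \<Longrightarrow> (\<lambda>w. K / norm w ^ 3) summable_on B"
  using summable_on_cmult_right[OF summable_inverse_cube_lattice, of K]
  by (auto intro: summable_on_subset_banach)

context
  fixes B :: "complex set" and z :: complex
  assumes B: "B \<subseteq> \<Lambda> - {0}" and z: "z \<notin> B"
begin

lemma summable_zeta_term: "(\<lambda>w. zeta_term w z) summable_on B"
proof -
  obtain r K where "r > 0" "cball z r \<inter> B = {}"
    and bounds: "\<And>w u. w \<in> B \<Longrightarrow> u \<in> cball z r \<Longrightarrow>
                   norm (zeta_term w u) \<le> K / norm w ^ 3 \<and> norm (wp_term w u) \<le> K / norm w ^ 3"
    using lattice_terms_bound[OF B z] by blast
  have "(\<lambda>w. norm (zeta_term w z)) summable_on B"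
    using \<open>r > 0\<close> bounds
    by (intro Infinite_Sum.abs_summable_on_comparison_test'[OF summable_inverse_cube_subset[OF B, of K]]) auto
  thus ?thesis
    by (rule abs_summable_summable)
qed

lemma zeta_sum_has_field_derivative:
  "((\<lambda>z. \<Sum>\<^sub>\<infinity>w\<in>B. zeta_term w z) has_field_derivative - (\<Sum>\<^sub>\<infinity>w\<in>B. wp_term w z)) (at z)"
proof -
  obtain r K where r: "r > 0" "cball z r \<inter> B = {}"
    and bounds: "\<And>w u. w \<in> B \<Longrightarrow> u \<in> cball z r \<Longrightarrow>
                   norm (zeta_term w u) \<le> K / norm w ^ 3 \<and> norm (wp_term w u) \<le> K / norm w ^ 3"
    using lattice_terms_bound[OF B z] by blast
  note bound = bounds[THEN conjunct1]
  have "((\<lambda>z. \<Sum>\<^sub>\<infinity>w\<in>B. zeta_term w z) has_field_derivative (\<Sum>\<^sub>\<infinity>w\<in>B. - wp_term w z)) (at z)"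
    using B r by (intro has_field_derivative_infsum[OF r(1) summable_inverse_cube_subset[OF B] bound]
                        zeta_term_has_field_derivative) auto
  thus ?thesis by (simp add: infsum_uminus)
qed

lemma wp_sum_has_field_derivative:
  "((\<lambda>z. \<Sum>\<^sub>\<infinity>w\<in>B. wp_term w z) has_field_derivative (\<Sum>\<^sub>\<infinity>w\<in>B. - 2 / (z - w) ^ 3)) (at z)"
  and summable_wp'_term: "(\<lambda>w. - 2 / (z - w) ^ 3) summable_on B"
proof -
  obtain r K where r: "r > 0" "cball z r \<inter> B = {}"
    and bounds: "\<And>w u. w \<in> B \<Longrightarrow> u \<in> cball z r \<Longrightarrow>
                   norm (zeta_term w u) \<le> K / norm w ^ 3 \<and> norm (wp_term w u) \<le> K / norm w ^ 3"
    using lattice_terms_bound[OF B z] by blast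
  note bound = bounds[THEN conjunct2]
  have deriv: "(wp_term w has_field_derivative - 2 / (u - w) ^ 3) (at u)"
    if "w \<in> B" "u \<in> cball z r" for w u
    using r that by (intro wp_term_has_field_derivative) auto
  note infsum_deriv = has_field_derivative_infsum[where A = B and a = z and f = wp_term
      and f' = "\<lambda>w u. - 2 / (u - w) ^ 3" and M = "\<lambda>w. K / norm w ^ 3",
      OF r(1) summable_inverse_cube_subset[OF B] bound deriv]
  show "((\<lambda>z. \<Sum>\<^sub>\<infinity>w\<in>B. wp_term w z) has_field_derivative (\<Sum>\<^sub>\<infinity>w\<in>B. - 2 / (z - w) ^ 3)) (at z)"
    and "(\<lambda>w. - 2 / (z - w) ^ 3) summable_on B"
    using infsum_deriv by simp_all
qed

end

lemma zeta_has_field_derivative: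
  assumes "z \<notin> \<Lambda>"
  shows "(\<zeta> has_field_derivative - wp z) (at z)"
proof -
  have "z \<noteq> 0" using assms by auto
  have "((\<lambda>z. 1 / z + (\<Sum>\<^sub>\<infinity>w\<in>\<Lambda> - {0}. zeta_term w z)) has_field_derivative
          - 1 / z ^ 2 + - (\<Sum>\<^sub>\<infinity>w\<in>\<Lambda> - {0}. wp_term w z)) (at z)"
    using \<open>z \<noteq> 0\<close> assms
    by (intro DERIV_add zeta_sum_has_field_derivative)
       (auto intro!: derivative_eq_intros simp: power2_eq_square)
  thus ?thesis
    unfolding weierstrass_zeta_altdef[abs_def] wp_def by simp
qed

lemma wp'_eq:
  assumes "z \<notin> \<Lambda>"
  shows "wp' z = - 2 / z ^ 3 + (\<Sum>\<^sub>\<infinity>w\<in>\<Lambda> - {0}. - 2 / (z - w) ^ 3)"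
proof -
  have "((\<lambda>w. - 2 / (z - w) ^ 3) has_sum (- 2 / (z - 0) ^ 3 + (\<Sum>\<^sub>\<infinity>w\<in>\<Lambda> - {0}. - 2 / (z - w) ^ 3)))
          (insert 0 (\<Lambda> - {0}))"
    using summable_wp'_term[of "\<Lambda> - {0}" z] assms by (intro has_sum_insert) auto
  moreover have "insert 0 (\<Lambda> - {0}) = \<Lambda>" by auto
  ultimately show ?thesis
    unfolding wp'_def by (simp add: infsumI)
qed

lemma wp_has_field_derivative:
  assumes "z \<notin> \<Lambda>"
  shows "(wp has_field_derivative wp' z) (at z)"
proof -
  have "z \<noteq> 0" using assms by auto
  have "((\<lambda>z. 1 / z ^ 2) has_field_derivative - 2 / z ^ 3) (at z)"
    using wp_term_has_field_derivative[of z 0] \<open>z \<noteq> 0\<close> by (simp add: wp_term_def[abs_def])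
  hence "((\<lambda>z. 1 / z ^ 2 + (\<Sum>\<^sub>\<infinity>w\<in>\<Lambda> - {0}. wp_term w z)) has_field_derivative
          - 2 / z ^ 3 + (\<Sum>\<^sub>\<infinity>w\<in>\<Lambda> - {0}. - 2 / (z - w) ^ 3)) (at z)"
    using assms by (intro DERIV_add wp_sum_has_field_derivative) auto
  thus ?thesis
    unfolding wp_def[abs_def] wp'_eq[OF assms] .
qed

lemma bij_betw_translate_lattice: "t \<in> \<Lambda> \<Longrightarrow> bij_betw (\<lambda>v. v + t) \<Lambda> \<Lambda>"
  by (rule bij_betwI[of _ _ _ "\<lambda>v. v - t"])
     (auto simp: lattice_translate_iff, metis diff_add_cancel lattice_translate_iff)

lemma bij_betw_uminus_lattice: "bij_betw uminus (\<Lambda> - {0}) (\<Lambda> - {0})"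
  by (rule bij_betwI[of _ _ _ uminus]) auto

lemma wp'_translate:
  assumes "t \<in> \<Lambda>"
  shows "wp' (z + t) = wp' z"
proof -
  have "wp' (z + t) = (\<Sum>\<^sub>\<infinity>w\<in>\<Lambda>. - 2 / (z + t - (w + t)) ^ 3)"
    unfolding wp'_def by (rule infsum_reindex_bij_betw[OF bij_betw_translate_lattice[OF assms], symmetric])
  thus ?thesis by (simp add: wp'_def)
qed

lemma wp_even: "wp (- z) = wp z"
proof -
  have "(\<Sum>\<^sub>\<infinity>w\<in>\<Lambda> - {0}. wp_term w (- z)) = (\<Sum>\<^sub>\<infinity>w\<in>\<Lambda> - {0}. wp_term (- w) (- z))"
    by (rule infsum_reindex_bij_betw[OF bij_betw_uminus_lattice, symmetric])
  also have "\<dots> = (\<Sum>\<^sub>\<infinity>w\<in>\<Lambda> - {0}. wp_term w z)"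
    by (simp add: wp_term_def power2_commute)
  finally show ?thesis by (simp add: wp_def)
qed

lemma zeta_odd: "\<zeta> (- z) = - \<zeta> z"
proof -
  have "(\<Sum>\<^sub>\<infinity>w\<in>\<Lambda> - {0}. zeta_term w (- z)) = (\<Sum>\<^sub>\<infinity>w\<in>\<Lambda> - {0}. zeta_term (- w) (- z))"
    by (rule infsum_reindex_bij_betw[OF bij_betw_uminus_lattice, symmetric])
  also have "\<dots> = (\<Sum>\<^sub>\<infinity>w\<in>\<Lambda> - {0}. - zeta_term w z)"
    by (rule infsum_cong) (simp add: zeta_term_def, metis minus_diff_eq minus_divide_right)
  also have "\<dots> = - (\<Sum>\<^sub>\<infinity>w\<in>\<Lambda> - {0}. zeta_term w z)"
    by (rule infsum_uminus)
  finally show ?thesis by (simp add: weierstrass_zeta_altdef)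
qed

lemma wp_translate:
  assumes "t \<in> \<Lambda>" "t / 2 \<notin> \<Lambda>" "z \<notin> \<Lambda>"
  shows "wp (z + t) = wp z"
  using translation_difference_constant[where g = wp and g' = wp', OF countable_lattice closed_lattice _ _
          wp_has_field_derivative wp'_translate[OF assms(1)] assms(3)] assms(1,2)
  by (simp add: lattice_translate_iff wp_even)

lemma zeta_translate:
  assumes "t \<in> \<Lambda>" "t / 2 \<notin> \<Lambda>" "z \<notin> \<Lambda>"
  shows "\<zeta> (z + t) = \<zeta> z + 2 * \<zeta> (t / 2)"
proof -
  have "- wp (z + t) = - wp z" if "z \<notin> \<Lambda>" for z
    using wp_translate[OF assms(1,2) that] by simp
  from translation_difference_constant[where g = \<zeta> and g' = "\<lambda>z. - wp z", OF countable_lattice closed_lattice _ _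
          zeta_has_field_derivative this assms(3)] assms(1,2)
  show ?thesis by (simp add: lattice_translate_iff zeta_odd)
qed

lemma zeta_has_pseudoperiod:
  "t \<in> \<Lambda> \<Longrightarrow> t / 2 \<notin> \<Lambda> \<Longrightarrow> has_pseudoperiod \<zeta> t (2 * \<zeta> (t / 2))"
  unfolding has_pseudoperiod_def using eventually_not_in_lattice
  by (rule eventually_mono) (rule zeta_translate)

lemma holomorphic_on_zeta_term_sum:
  assumes "B \<subseteq> \<Lambda> - {0}" "S \<inter> B = {}"
  shows "(\<lambda>z. \<Sum>\<^sub>\<infinity>w\<in>B. zeta_term w z) holomorphic_on S"
  unfolding holomorphic_on_def field_differentiable_def
  using zeta_sum_has_field_derivative[OF assms(1)] assms(2)
  by (blast intro: has_field_derivative_at_within)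

lemma holomorphic_on_zeta: "S \<inter> \<Lambda> = {} \<Longrightarrow> \<zeta> holomorphic_on S"
  unfolding holomorphic_on_def field_differentiable_def
  using zeta_has_field_derivative by (blast intro: has_field_derivative_at_within)

lemma meromorphic_zeta: "\<zeta> meromorphic_on UNIV"
proof (subst meromorphic_on_meromorphic_at, intro ballI)
  fix z0 :: complex
  define F where "F = (\<Lambda> - {0}) \<inter> cball z0 1"
  define B where "B = \<Lambda> - {0} - F"
  define g where "g = (\<lambda>z. 1 / z + (\<Sum>w\<in>F. zeta_term w z) + (\<Sum>\<^sub>\<infinity>w\<in>B. zeta_term w z))"
  have "finite F"
    unfolding F_def using finite_lattice_inter_cball by (auto intro: finite_subset)
  have B: "B \<subseteq> \<Lambda> - {0}" "ball z0 1 \<inter> B = {}"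
    by (auto simp: B_def F_def)
  have \<zeta>_eq: "\<zeta> z = g z" if "z \<in> ball z0 1" for z
  proof -
    have "(\<lambda>w. zeta_term w z) summable_on B"
      using B that by (intro summable_zeta_term) auto
    hence "(\<Sum>\<^sub>\<infinity>w\<in>F \<union> B. zeta_term w z) = (\<Sum>\<^sub>\<infinity>w\<in>F. zeta_term w z) + (\<Sum>\<^sub>\<infinity>w\<in>B. zeta_term w z)"
      using \<open>finite F\<close> by (intro infsum_Un_disjoint) (auto simp: B_def)
    moreover have "F \<union> B = \<Lambda> - {0}"
      by (auto simp: B_def F_def)
    ultimately show ?thesis
      using \<open>finite F\<close> by (simp add: weierstrass_zeta_altdef g_def add.assoc)
  qed
  have "(\<lambda>z. \<Sum>\<^sub>\<infinity>w\<in>B. zeta_term w z) analytic_on ball z0 1"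
    using holomorphic_on_zeta_term_sum[OF B] by (simp add: analytic_on_open)
  hence "g meromorphic_on ball z0 1"
    unfolding g_def zeta_term_def by (intro meromorphic_intros analytic_on_imp_meromorphic_on) auto
  moreover have "\<forall>\<^sub>F w in at z. \<zeta> w = g w" if "z \<in> ball z0 1" for z
    using eventually_at_in_open'[OF open_ball that] by (rule eventually_mono) (rule \<zeta>_eq)
  ultimately have "\<zeta> meromorphic_on ball z0 1"
    using meromorphic_on_cong by blast
  thus "\<zeta> meromorphic_on {z0}"
    by (rule meromorphic_on_subset) simp
qed

end

section \<open>Legendre's relation\<close>

lemma contour_integral_linepath_translate:
  "contour_integral (linepath (a + t) (b + t)) f = contour_integral (linepath a b) (\<lambda>z. f (z + t))"
proof -
  have "linepath (a + t) (b + t) x = linepath a b x + t" for x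
    by (simp add: linepath_def scaleR_conv_of_real algebra_simps)
  thus ?thesis unfolding contour_integral_integral by simp
qed

lemma contour_integral_triangle:
  assumes "continuous_on (closed_segment a b) f" "continuous_on (closed_segment b c) f"
    "continuous_on (closed_segment c a) f"
  shows "contour_integral (linepath a b +++ linepath b c +++ linepath c a) f =
         contour_integral (linepath a b) f + contour_integral (linepath b c) f +
         contour_integral (linepath c a) f"
proof -
  have "f contour_integrable_on linepath a b" "f contour_integrable_on linepath b c"
       "f contour_integrable_on linepath c a"
    using assms by (auto intro: contour_integrable_continuous_linepath)
  moreover from this have "f contour_integrable_on (linepath b c +++ linepath c a)"
    by (intro contour_integrable_joinI) auto
  ultimately show ?thesis
    by (simp add: add.assoc)
qed

text \<open>The two triangles \<open>a b c\<close> and \<open>a c d\<close> share the diagonal with opposite orientations.\<close>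
lemma contour_integral_quadrilateral_split:
  assumes "continuous_on (closed_segment a b) f" "continuous_on (closed_segment b c) f"
    "continuous_on (closed_segment c d) f" "continuous_on (closed_segment d a) f"
    "continuous_on (closed_segment a c) f"
  shows "contour_integral (linepath a b) f + contour_integral (linepath b c) f +
         contour_integral (linepath c d) f + contour_integral (linepath d a) f =
         contour_integral (linepath a b +++ linepath b c +++ linepath c a) f +
         contour_integral (linepath a c +++ linepath c d +++ linepath d a) f"
proof -
  have "continuous_on (closed_segment c a) f"
    using assms(5) by (simp add: closed_segment_commute)
  moreover have "contour_integral (linepath c a) f = - contour_integral (linepath a c) f"
    using calculation by (rule contour_integral_reverse_linepath)
  ultimately show ?thesis
    using assms by (simp add: contour_integral_triangle)
qed

lemma contour_integral_parallelogram_pseudoperiodic: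
  assumes cont: "continuous_on (closed_segment a (a + t1)) f" "continuous_on (closed_segment a (a + t2)) f"
    and pp1: "\<And>z. z \<in> closed_segment a (a + t2) \<Longrightarrow> f (z + t1) = f z + e1"
    and pp2: "\<And>z. z \<in> closed_segment a (a + t1) \<Longrightarrow> f (z + t2) = f z + e2"
  shows "contour_integral (linepath a (a + t1)) f + contour_integral (linepath (a + t1) (a + t1 + t2)) f +
         contour_integral (linepath (a + t1 + t2) (a + t2)) f + contour_integral (linepath (a + t2) a) f =
         e1 * t2 - e2 * t1"
proof -
  have shift: "contour_integral (linepath (b + t) (c + t)) f = contour_integral (linepath b c) f + e * (c - b)"
    if "continuous_on (closed_segment b c) f" "\<And>z. z \<in> closed_segment b c \<Longrightarrow> f (z + t) = f z + e"
    for b c t e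
  proof -
    have "contour_integral (linepath (b + t) (c + t)) f = contour_integral (linepath b c) (\<lambda>z. f z + e)"
      unfolding contour_integral_linepath_translate using that(2)
      by (intro contour_integral_cong) auto
    also have "\<dots> = contour_integral (linepath b c) f + e * (c - b)"
      using that(1) by (subst contour_integral_add) (auto intro: contour_integrable_continuous_linepath)
    finally show ?thesis .
  qed
  have "contour_integral (linepath (a + t1) (a + t1 + t2)) f = contour_integral (linepath a (a + t2)) f + e1 * t2"
    using shift[OF cont(2) pp1] by (simp add: add_ac)
  moreover have "contour_integral (linepath (a + t1 + t2) (a + t2)) f =
                 - (contour_integral (linepath a (a + t1)) f + e2 * t1)"
  proof -
    have seg: "closed_segment (a + t1) a = closed_segment a (a + t1)"
      by (rule closed_segment_commute)
    have "contour_integral (linepath (a + t1 + t2) (a + t2)) f =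
          contour_integral (linepath (a + t1) a) f + e2 * (a - (a + t1))"
      by (rule shift) (use cont(1) pp2 in \<open>simp_all add: seg\<close>)
    also have "contour_integral (linepath (a + t1) a) f = - contour_integral (linepath a (a + t1)) f"
      by (rule contour_integral_reverse_linepath) (simp add: seg cont(1))
    finally show ?thesis by (simp add: algebra_simps)
  qed
  moreover have "contour_integral (linepath (a + t2) a) f = - contour_integral (linepath a (a + t2)) f"
  proof (rule contour_integral_reverse_linepath)
    show "continuous_on (closed_segment (a + t2) a) f"
      using cont(2) by (simp only: closed_segment_commute)
  qed
  ultimately show ?thesis by (simp add: algebra_simps)
qed

lemma contour_integral_inverse_triangle_nonzero:
  assumes "0 \<in> interior (convex hull {a, b, c})"
  shows "contour_integral (linepath a b +++ linepath b c +++ linepath c a) (\<lambda>z. 1 / z) \<noteq> 0"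
proof -
  let ?g = "linepath a b +++ linepath b c +++ linepath c a"
  have "0 \<notin> closed_segment a b \<union> closed_segment b c \<union> closed_segment c a"
    using assms interior_of_triangle[of a b c] by auto
  hence "0 \<notin> path_image ?g"
    by (auto simp: path_image_join)
  hence "winding_number ?g 0 = 1 / (2 * pi * \<i>) * contour_integral ?g (\<lambda>z. 1 / z)"
    using winding_number_valid_path[of ?g 0] by (simp add: valid_path_join)
  moreover have "winding_number ?g 0 \<noteq> 0"
    using winding_number_triangle[OF assms] by simp
  ultimately show ?thesis by auto
qed

context period_lattice
begin

lemma point_add_t1: "point x y + t1 = point (x + 1) y"
  and point_add_t2: "point x y + t2 = point x (y + 1)"
  by (simp_all add: point_def algebra_simps)

lemma point_in_convex_hull_3:
  assumes "z \<in> convex hull {point x1 y1, point x2 y2, point x3 y3}"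
  obtains u v w where "0 \<le> u" "0 \<le> v" "0 \<le> w" "u + v + w = 1"
    "z = point (u * x1 + v * x2 + w * x3) (u * y1 + v * y2 + w * y3)"
proof -
  from assms obtain u v w where uvw: "0 \<le> u" "0 \<le> v" "0 \<le> w" "u + v + w = 1"
    "z = u *\<^sub>R point x1 y1 + v *\<^sub>R point x2 y2 + w *\<^sub>R point x3 y3"
    unfolding convex_hull_3 by auto
  moreover have "z = point (u * x1 + v * x2 + w * x3) (u * y1 + v * y2 + w * y3)"
    unfolding uvw(5) point_def by (simp add: scaleR_conv_of_real algebra_simps)
  ultimately show ?thesis using that by blast
qed

lemma point_in_closed_segment:
  assumes "z \<in> closed_segment (point x1 y1) (point x2 y2)"
  obtains u where "0 \<le> u" "u \<le> 1" "z = point (x1 + u * (x2 - x1)) (y1 + u * (y2 - y1))"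
proof -
  from assms obtain u where u: "0 \<le> u" "u \<le> 1" "z = (1 - u) *\<^sub>R point x1 y1 + u *\<^sub>R point x2 y2"
    unfolding closed_segment_def by auto
  moreover have "z = point (x1 + u * (x2 - x1)) (y1 + u * (y2 - y1))"
    unfolding u(3) point_def by (simp add: scaleR_conv_of_real algebra_simps)
  ultimately show ?thesis using that by blast
qed

lemma point_in_lattice_small: "point x y \<in> \<Lambda> \<Longrightarrow> \<bar>x\<bar> < 1 \<Longrightarrow> \<bar>y\<bar> < 1 \<Longrightarrow> x = 0 \<and> y = 0"
  by (auto simp: point_in_lattice_iff intro: Ints_nonzero_abs_less1)

definition corner :: complex where
  "corner = point (-1/3) (-1/4)"

lemma corner_add: "corner + t1 = point (2/3) (-1/4)" "point (2/3) (-1/4) + t2 = point (2/3) (3/4)"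
  "corner + t2 = point (-1/3) (3/4)"
  by (simp_all add: corner_def point_add_t1 point_add_t2)

text \<open>The period parallelogram with vertices \<open>corner\<close>, \<open>corner + t1\<close>, \<open>corner + t1 + t2\<close>,
  \<open>corner + t2\<close> contains exactly one lattice point, \<open>0\<close>, which lies in the interior of its first half.\<close>
lemma period_parallelogram_triangles:
  shows "convex hull {corner, corner + t1, corner + t1 + t2} \<inter> (\<Lambda> - {0}) = {}"
    and "convex hull {corner, corner + t1 + t2, corner + t2} \<inter> \<Lambda> = {}"
  unfolding corner_add unfolding corner_def
proof -
  show "convex hull {point (-1/3) (-1/4), point (2/3) (-1/4), point (2/3) (3/4)} \<inter> (\<Lambda> - {0}) = {}"
  proof (intro equalityI subsetI, elim IntE)
    fix z assume "z \<in> convex hull {point (-1/3) (-1/4), point (2/3) (-1/4), point (2/3) (3/4)}"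
      and z: "z \<in> \<Lambda> - {0}"
    then obtain u v w where "0 \<le> u" "0 \<le> v" "0 \<le> w" "u + v + w = 1"
      and "z = point (u * (-1/3) + v * (2/3) + w * (2/3)) (u * (-1/4) + v * (-1/4) + w * (3/4))"
      by (elim point_in_convex_hull_3)
    with z show "z \<in> {}"
      using point_in_lattice_small point_eq_0_iff by fastforce
  qed simp
  show "convex hull {point (-1/3) (-1/4), point (2/3) (3/4), point (-1/3) (3/4)} \<inter> \<Lambda> = {}"
  proof (intro equalityI subsetI, elim IntE)
    fix z assume "z \<in> convex hull {point (-1/3) (-1/4), point (2/3) (3/4), point (-1/3) (3/4)}"
      and z: "z \<in> \<Lambda>"
    then obtain u v w where "0 \<le> u" "0 \<le> v" "0 \<le> w" "u + v + w = 1"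
      and "z = point (u * (-1/3) + v * (2/3) + w * (-1/3)) (u * (-1/4) + v * (3/4) + w * (3/4))"
      by (elim point_in_convex_hull_3)
    with z show "z \<in> {}"
      using point_in_lattice_small by fastforce
  qed simp
qed

lemma zero_in_interior_period_triangle: "0 \<in> interior (convex hull {corner, corner + t1, corner + t1 + t2})"
  unfolding corner_add unfolding corner_def
proof -
  have "0 \<in> convex hull {point (-1/3) (-1/4), point (2/3) (-1/4), point (2/3) (3/4)}"
    unfolding convex_hull_3
    by (rule CollectI, rule exI[of _ "2/3"], rule exI[of _ "1/12"], rule exI[of _ "1/4"])
       (simp add: point_def scaleR_conv_of_real algebra_simps)
  moreover have "0 \<notin> closed_segment (point x1 y1) (point x2 y2)"
    if "\<And>u. 0 \<le> u \<Longrightarrow> u \<le> 1 \<Longrightarrow> x1 + u * (x2 - x1) \<noteq> 0 \<or> y1 + u * (y2 - y1) \<noteq> 0"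
    for x1 y1 x2 y2
    using that point_in_closed_segment point_eq_0_iff by metis
  hence "0 \<notin> closed_segment (point (-1/3) (-1/4)) (point (2/3) (-1/4))"
        "0 \<notin> closed_segment (point (2/3) (-1/4)) (point (2/3) (3/4))"
        "0 \<notin> closed_segment (point (2/3) (3/4)) (point (-1/3) (-1/4))"
    by auto
  ultimately show "0 \<in> interior (convex hull {point (-1/3) (-1/4), point (2/3) (-1/4), point (2/3) (3/4)})"
    by (simp add: interior_of_triangle)
qed

lemma period_parallelogram_sides:
  "closed_segment corner (corner + t1) \<inter> \<Lambda> = {}"
  "closed_segment (corner + t1) (corner + t1 + t2) \<inter> \<Lambda> = {}"
  "closed_segment (corner + t1 + t2) (corner + t2) \<inter> \<Lambda> = {}"
  "closed_segment (corner + t2) corner \<inter> \<Lambda> = {}"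
  "closed_segment corner (corner + t1 + t2) \<inter> \<Lambda> = {}"
proof -
  have in_hull: "closed_segment p q \<subseteq> convex hull {x, y, z}" if "p \<in> {x, y, z}" "q \<in> {x, y, z}"
    for p q x y z :: complex
    using that by (intro closed_segment_subset_convex_hull) (auto intro: hull_inc)
  note triangles = period_parallelogram_triangles
  have "closed_segment corner (corner + t1) \<union> closed_segment (corner + t1) (corner + t1 + t2)
          \<subseteq> convex hull {corner, corner + t1, corner + t1 + t2}"
    by (intro Un_least in_hull) auto
  moreover have "0 \<notin> closed_segment corner (corner + t1) \<union> closed_segment (corner + t1) (corner + t1 + t2)"
    using zero_in_interior_period_triangle interior_of_triangle[of corner "corner + t1" "corner + t1 + t2"]
    by auto
  ultimately show "closed_segment corner (corner + t1) \<inter> \<Lambda> = {}"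
    "closed_segment (corner + t1) (corner + t1 + t2) \<inter> \<Lambda> = {}"
    using triangles(1) by blast+
  have "closed_segment (corner + t1 + t2) (corner + t2) \<union> closed_segment (corner + t2) corner \<union>
          closed_segment corner (corner + t1 + t2) \<subseteq> convex hull {corner, corner + t1 + t2, corner + t2}"
    by (intro Un_least in_hull) auto
  with triangles(2) show "closed_segment (corner + t1 + t2) (corner + t2) \<inter> \<Lambda> = {}"
    "closed_segment (corner + t2) corner \<inter> \<Lambda> = {}"
    "closed_segment corner (corner + t1 + t2) \<inter> \<Lambda> = {}"
    by blast+
qed

definition boundary_integral :: "(complex \<Rightarrow> complex) \<Rightarrow> complex" where
  "boundary_integral f =
     contour_integral (linepath corner (corner + t1)) f +
     contour_integral (linepath (corner + t1) (corner + t1 + t2)) f +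
     contour_integral (linepath (corner + t1 + t2) (corner + t2)) f +
     contour_integral (linepath (corner + t2) corner) f"

lemma boundary_integral_split:
  assumes "continuous_on (- \<Lambda>) f"
  shows "boundary_integral f =
           contour_integral (linepath corner (corner + t1) +++ linepath (corner + t1) (corner + t1 + t2) +++
                             linepath (corner + t1 + t2) corner) f +
           contour_integral (linepath corner (corner + t1 + t2) +++ linepath (corner + t1 + t2) (corner + t2) +++
                             linepath (corner + t2) corner) f"
  unfolding boundary_integral_def using period_parallelogram_sides
  by (intro contour_integral_quadrilateral_split continuous_on_subset[OF assms]) auto

lemma boundary_integral_add:
  assumes "continuous_on (- \<Lambda>) f" "continuous_on (- \<Lambda>) g"
  shows "boundary_integral (\<lambda>z. f z + g z) = boundary_integral f + boundary_integral g"
proof -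
  have "contour_integral (linepath p q) (\<lambda>z. f z + g z) =
          contour_integral (linepath p q) f + contour_integral (linepath p q) g"
    if "closed_segment p q \<inter> \<Lambda> = {}" for p q
    using that by (intro contour_integral_add contour_integrable_continuous_linepath
                         continuous_on_subset[OF assms(1)] continuous_on_subset[OF assms(2)]) auto
  thus ?thesis
    unfolding boundary_integral_def using period_parallelogram_sides by simp
qed

lemma continuous_on_zeta: "continuous_on (- \<Lambda>) \<zeta>"
  by (intro holomorphic_on_imp_continuous_on holomorphic_on_zeta) auto

lemma continuous_on_inverse_off_lattice: "continuous_on (- \<Lambda>) (\<lambda>z. 1 / z)"
  by (intro continuous_intros) auto

lemma holomorphic_on_zeta_minus_pole:
  "S \<inter> (\<Lambda> - {0}) = {} \<Longrightarrow> (\<lambda>z. \<zeta> z - 1 / z) holomorphic_on S"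
  unfolding weierstrass_zeta_altdef by (simp add: holomorphic_on_zeta_term_sum)

lemma boundary_integral_zeta: "boundary_integral \<zeta> = 2 * \<zeta> (t1 / 2) * t2 - 2 * \<zeta> (t2 / 2) * t1"
  unfolding boundary_integral_def
proof (rule contour_integral_parallelogram_pseudoperiodic)
  show "continuous_on (closed_segment corner (corner + t1)) \<zeta>"
       "continuous_on (closed_segment corner (corner + t2)) \<zeta>"
    using period_parallelogram_sides(1,4)
    by (auto intro: continuous_on_subset[OF continuous_on_zeta] simp: closed_segment_commute)
  show "\<zeta> (z + t1) = \<zeta> z + 2 * \<zeta> (t1 / 2)" if "z \<in> closed_segment corner (corner + t2)" for z
    using that period_parallelogram_sides(4)
    by (intro zeta_translate half_periods_not_in_lattice) (auto simp: closed_segment_commute)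
  show "\<zeta> (z + t2) = \<zeta> z + 2 * \<zeta> (t2 / 2)" if "z \<in> closed_segment corner (corner + t1)" for z
    using that period_parallelogram_sides(1)
    by (intro zeta_translate half_periods_not_in_lattice) auto
qed

lemma boundary_integral_zeta_minus_pole: "boundary_integral (\<lambda>z. \<zeta> z - 1 / z) = 0"
proof -
  have "continuous_on (- \<Lambda>) (\<lambda>z. \<zeta> z - 1 / z)"
    using continuous_on_zeta continuous_on_inverse_off_lattice by (rule continuous_on_diff)
  moreover have "contour_integral (linepath corner (corner + t1) +++ linepath (corner + t1) (corner + t1 + t2) +++
                   linepath (corner + t1 + t2) corner) (\<lambda>z. \<zeta> z - 1 / z) = 0"
    using period_parallelogram_triangles(1)
    by (intro contour_integral_unique Cauchy_theorem_triangle holomorphic_on_zeta_minus_pole)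
  moreover have "contour_integral (linepath corner (corner + t1 + t2) +++ linepath (corner + t1 + t2) (corner + t2) +++
                   linepath (corner + t2) corner) (\<lambda>z. \<zeta> z - 1 / z) = 0"
    using period_parallelogram_triangles(2)
    by (intro contour_integral_unique Cauchy_theorem_triangle holomorphic_on_zeta_minus_pole) auto
  ultimately show ?thesis
    by (simp add: boundary_integral_split)
qed

lemma boundary_integral_inverse: "boundary_integral (\<lambda>z. 1 / z) \<noteq> 0"
proof -
  have "contour_integral (linepath corner (corner + t1 + t2) +++ linepath (corner + t1 + t2) (corner + t2) +++
          linepath (corner + t2) corner) (\<lambda>z. 1 / z) = 0"
    using period_parallelogram_triangles(2)
    by (intro contour_integral_unique Cauchy_theorem_triangle holomorphic_intros) auto
  thus ?thesis
    using contour_integral_inverse_triangle_nonzero[OF zero_in_interior_period_triangle]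
    by (simp add: boundary_integral_split[OF continuous_on_inverse_off_lattice])
qed

text \<open>Legendre's relation, up to the value \<open>\<plusminus>\<pi> \<i>\<close> of the determinant.\<close>
lemma legendre_determinant_nonzero: "t2 * \<zeta> (t1 / 2) \<noteq> t1 * \<zeta> (t2 / 2)"
proof -
  have "boundary_integral \<zeta> = boundary_integral (\<lambda>z. 1 / z) + boundary_integral (\<lambda>z. \<zeta> z - 1 / z)"
    using boundary_integral_add[OF continuous_on_inverse_off_lattice
            continuous_on_diff[OF continuous_on_zeta continuous_on_inverse_off_lattice]]
    by simp
  hence "2 * (t2 * \<zeta> (t1 / 2) - t1 * \<zeta> (t2 / 2)) \<noteq> 0"
    using boundary_integral_zeta boundary_integral_zeta_minus_pole boundary_integral_inverse
    by (simp add: algebra_simps)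
  thus ?thesis by simp
qed

end

section \<open>The decomposition\<close>

lemma linear_system_2x2_solvable:
  fixes p1 p2 q1 q2 u1 u2 :: "'a::field"
  assumes "p1 * q2 - p2 * q1 \<noteq> 0"
  obtains x y where "x * p1 + y * q1 = u1" "x * p2 + y * q2 = u2"
proof -
  define D where "D = p1 * q2 - p2 * q1"
  have "D \<noteq> 0" using assms by (simp add: D_def)
  have "(u1 * q2 - u2 * q1) * p1 + (p1 * u2 - p2 * u1) * q1 = u1 * D"
       "(u1 * q2 - u2 * q1) * p2 + (p1 * u2 - p2 * u1) * q2 = u2 * D"
    unfolding D_def by algebra+
  with \<open>D \<noteq> 0\<close> show ?thesis
    by (intro that[of "(u1 * q2 - u2 * q1) / D" "(p1 * u2 - p2 * u1) / D"]) (simp_all add: field_simps)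
qed

lemma linear_system_2x2_unique:
  fixes p1 p2 q1 q2 :: "'a::field"
  assumes "p1 * q2 - p2 * q1 \<noteq> 0"
    and "x * p1 + y * q1 = x' * p1 + y' * q1" "x * p2 + y * q2 = x' * p2 + y' * q2"
  shows "x = x' \<and> y = y'"
proof -
  have "(x - x') * (p1 * q2 - p2 * q1) = 0" "(y - y') * (p1 * q2 - p2 * q1) = 0"
    using assms(2,3) by algebra+
  with assms(1) show ?thesis by simp
qed

lemma simply_pseudoperiodic_decomposition:
  assumes f: "f meromorphic_on UNIV" and "t1 \<noteq> 0" and "pseudoperiodic_wrt f (lattice1 t1)"
  shows "\<exists>a \<phi>. \<phi> meromorphic_on UNIV \<and> has_period \<phi> t1 \<and>
          (\<forall>\<^sub>\<approx>z. f z = a * z + \<phi> z) \<and>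
          (\<forall>\<^sub>\<approx>z. f (z + t1) = f z + a * t1) \<and>
          (\<forall>a' \<phi>'. \<phi>' meromorphic_on UNIV \<and> has_period \<phi>' t1 \<and>
               (\<forall>\<^sub>\<approx>z. f z = a' * z + \<phi>' z) \<longrightarrow>
             a' = a \<and> (\<forall>\<^sub>\<approx>z. \<phi>' z = \<phi> z))"
proof -
  have "t1 \<in> lattice1 t1"
    unfolding lattice1_def by (rule CollectI, rule exI[of _ 1]) simp
  then obtain e where e: "has_pseudoperiod f t1 e"
    using assms(3) unfolding pseudoperiodic_wrt_def has_pseudoperiod_def by blast
  define a where "a = e / t1"
  have e_eq: "e = a * t1"
    using \<open>t1 \<noteq> 0\<close> by (simp add: a_def)
  define \<phi> where "\<phi> = (\<lambda>z. f z - a * z)"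
  have "has_period \<phi> t1"
    using has_pseudoperiod_diff[OF e has_pseudoperiod_linear[of a]]
    by (simp add: has_period_iff_has_pseudoperiod \<phi>_def e_eq)
  moreover have "a' = a \<and> (\<forall>\<^sub>\<approx>z. \<phi>' z = \<phi> z)"
    if "has_period \<phi>' t1" and f': "\<forall>\<^sub>\<approx>z. f z = a' * z + \<phi>' z" for a' \<phi>'
  proof
    have "has_pseudoperiod f t1 (a' * t1)"
      using f' has_pseudoperiod_linear that(1) by (rule has_pseudoperiod_add_periodic)
    with e have "a' * t1 = a * t1"
      using has_pseudoperiod_unique e_eq by fastforce
    with \<open>t1 \<noteq> 0\<close> show "a' = a" by simp
    from f' show "\<forall>\<^sub>\<approx>z. \<phi>' z = \<phi> z"
      by eventually_elim (simp add: \<phi>_def \<open>a' = a\<close>)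
  qed
  moreover have "\<phi> meromorphic_on UNIV"
    unfolding \<phi>_def by (intro meromorphic_intros f)
  moreover have "\<forall>\<^sub>\<approx>z. f z = a * z + \<phi> z"
    by (simp add: \<phi>_def)
  ultimately show ?thesis
    using e unfolding has_pseudoperiod_def e_eq by blast
qed

context period_lattice
begin

lemma zeta_combination_has_pseudoperiod:
  assumes "t \<in> \<Lambda>" "t / 2 \<notin> \<Lambda>"
  shows "has_pseudoperiod (\<lambda>z. a * z + b * \<zeta> z) t (a * t + b * (2 * \<zeta> (t / 2)))"
  using assms by (intro has_pseudoperiod_add has_pseudoperiod_linear has_pseudoperiod_cmult
                        zeta_has_pseudoperiod)

lemma zeta_combination_coefficients_unique:
  assumes "\<forall>\<^sub>\<approx>z. f z = a * z + b * \<zeta> z + E z" "has_period E t1" "has_period E t2"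
    and "\<forall>\<^sub>\<approx>z. f z = a' * z + b' * \<zeta> z + E' z" "has_period E' t1" "has_period E' t2"
  shows "a' = a \<and> b' = b"
proof (rule linear_system_2x2_unique)
  note pseudoperiod = zeta_combination_has_pseudoperiod[OF _ half_periods_not_in_lattice(1)]
    zeta_combination_has_pseudoperiod[OF _ half_periods_not_in_lattice(2)]
  show "t1 * (2 * \<zeta> (t2 / 2)) - t2 * (2 * \<zeta> (t1 / 2)) \<noteq> 0"
    using legendre_determinant_nonzero by (simp add: algebra_simps)
  show "a' * t1 + b' * (2 * \<zeta> (t1 / 2)) = a * t1 + b * (2 * \<zeta> (t1 / 2))"
    using has_pseudoperiod_add_periodic[OF assms(1) pseudoperiod(1) assms(2)]
          has_pseudoperiod_add_periodic[OF assms(4) pseudoperiod(1) assms(5)]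
    by (auto intro: has_pseudoperiod_unique)
  show "a' * t2 + b' * (2 * \<zeta> (t2 / 2)) = a * t2 + b * (2 * \<zeta> (t2 / 2))"
    using has_pseudoperiod_add_periodic[OF assms(1) pseudoperiod(2) assms(3)]
          has_pseudoperiod_add_periodic[OF assms(4) pseudoperiod(2) assms(6)]
    by (auto intro: has_pseudoperiod_unique)
qed

lemma doubly_pseudoperiodic_decomposition:
  assumes f: "f meromorphic_on UNIV" and "pseudoperiodic_wrt f \<Lambda>"
  shows "\<exists>a b E. E meromorphic_on UNIV \<and> has_period E t1 \<and> has_period E t2 \<and>
          (\<forall>\<^sub>\<approx>z. f z = a * z + b * \<zeta> z + E z) \<and>
          (\<forall>\<^sub>\<approx>z. f (z + t1) = f z + (a * t1 + 2 * b * \<zeta> (t1 / 2))) \<and>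
          (\<forall>\<^sub>\<approx>z. f (z + t2) = f z + (a * t2 + 2 * b * \<zeta> (t2 / 2))) \<and>
          (\<forall>a' b' E'. E' meromorphic_on UNIV \<and> has_period E' t1 \<and> has_period E' t2 \<and>
               (\<forall>\<^sub>\<approx>z. f z = a' * z + b' * \<zeta> z + E' z) \<longrightarrow>
             a' = a \<and> b' = b \<and> (\<forall>\<^sub>\<approx>z. E' z = E z))"
proof -
  obtain e1 e2 where e: "has_pseudoperiod f t1 e1" "has_pseudoperiod f t2 e2"
    using assms(2) unfolding pseudoperiodic_wrt_def has_pseudoperiod_def by force
  have "t1 * (2 * \<zeta> (t2 / 2)) - t2 * (2 * \<zeta> (t1 / 2)) \<noteq> 0"
    using legendre_determinant_nonzero by (simp add: algebra_simps)
  then obtain a b where ab: "a * t1 + b * (2 * \<zeta> (t1 / 2)) = e1" "a * t2 + b * (2 * \<zeta> (t2 / 2)) = e2"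
    by (rule linear_system_2x2_solvable)
  define E where "E = (\<lambda>z. f z - (a * z + b * \<zeta> z))"
  have E: "E meromorphic_on UNIV" "has_period E t1" "has_period E t2"
    "\<forall>\<^sub>\<approx>z. f z = a * z + b * \<zeta> z + E z"
    using has_pseudoperiod_diff[OF e(1) zeta_combination_has_pseudoperiod[of t1 a b]]
      has_pseudoperiod_diff[OF e(2) zeta_combination_has_pseudoperiod[of t2 a b]]
    by (auto simp: E_def has_period_iff_has_pseudoperiod ab half_periods_not_in_lattice
             intro!: meromorphic_intros f meromorphic_zeta)
  moreover have "a' = a \<and> b' = b \<and> (\<forall>\<^sub>\<approx>z. E' z = E z)"
    if "has_period E' t1" "has_period E' t2" and f': "\<forall>\<^sub>\<approx>z. f z = a' * z + b' * \<zeta> z + E' z"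
    for a' b' E'
  proof -
    have "a' = a" "b' = b"
      using zeta_combination_coefficients_unique[OF E(4,2,3) f' that(1,2)] by simp_all
    moreover from f' have "\<forall>\<^sub>\<approx>z. E' z = E z"
      by eventually_elim (simp add: E_def \<open>a' = a\<close> \<open>b' = b\<close>)
    ultimately show ?thesis by simp
  qed
  moreover have "e1 = a * t1 + 2 * b * \<zeta> (t1 / 2)" "e2 = a * t2 + 2 * b * \<zeta> (t2 / 2)"
    using ab by (simp_all add: algebra_simps)
  ultimately show ?thesis
    using e unfolding has_pseudoperiod_def by blast
qed

end

theorem proposition2p4:
  shows
  "(\<forall>f t1. f meromorphic_on UNIV \<and> t1 \<noteq> 0 \<and> pseudoperiodic_wrt f (lattice1 t1) \<longrightarrow>
      (\<exists>a \<phi>. \<phi> meromorphic_on UNIV \<and> has_period \<phi> t1 \<and>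
          (\<forall>\<^sub>\<approx>z. f z = a * z + \<phi> z) \<and>
          (\<forall>\<^sub>\<approx>z. f (z + t1) = f z + a * t1) \<and>
          (\<forall>a' \<phi>'. \<phi>' meromorphic_on UNIV \<and> has_period \<phi>' t1 \<and>
               (\<forall>\<^sub>\<approx>z. f z = a' * z + \<phi>' z) \<longrightarrow>
             a' = a \<and> (\<forall>\<^sub>\<approx>z. \<phi>' z = \<phi> z))))
   \<and>
   (\<forall>f t1 t2. f meromorphic_on UNIV \<and> Im (t2 / t1) > 0 \<and>
        pseudoperiodic_wrt f (lattice2 t1 t2) \<longrightarrow>
      (\<exists>a b E. E meromorphic_on UNIV \<and> has_period E t1 \<and> has_period E t2 \<and>
          (\<forall>\<^sub>\<approx>z. f z = a * z + b * weierstrass_zeta t1 t2 z + E z) \<and>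
          (\<forall>\<^sub>\<approx>z. f (z + t1) = f z + (a * t1 + 2 * b * weierstrass_zeta t1 t2 (t1 / 2))) \<and>
          (\<forall>\<^sub>\<approx>z. f (z + t2) = f z + (a * t2 + 2 * b * weierstrass_zeta t1 t2 (t2 / 2))) \<and>
          (\<forall>a' b' E'. E' meromorphic_on UNIV \<and> has_period E' t1 \<and> has_period E' t2 \<and>
               (\<forall>\<^sub>\<approx>z. f z = a' * z + b' * weierstrass_zeta t1 t2 z + E' z) \<longrightarrow>
             a' = a \<and> b' = b \<and> (\<forall>\<^sub>\<approx>z. E' z = E z))))"
  using simply_pseudoperiodic_decomposition
    period_lattice.doubly_pseudoperiodic_decomposition[OF period_lattice.intro]
  by blast

end
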